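(* Let $\rho=\{B_1,\dots,B_r\}$ be a partition of $\{1,\dots,n\}$. For every $\mathbf{m}=(m_1,\dots,m_r)\in\mathbb{Z}^r_0$, the limit $\lim_{N\to\infty}G^\rho_N(\mathbf{m})$ exists and $$\lim_{N\to\infty}G^\rho_N(\mathbf{m})=\lim_{N\to\infty}G^\rho_N(0,\dots,0)=K_{\rho,u}.$$
   Context: $\mathbb{Z}^r_0:=\{(z_1,\dots,z_r)\in\mathbb{Z}^r: z_1+\dots+z_r=0\}$. For $\mathbf{i}=(i_1,\dots,i_n)\in\{1,\dots,N\}^n$ set $i_0:=i_n$ and $E_b(\mathbf{i}):=\sum_{k\in B_b}(i_{k-1}-i_k)$, $b=1,\dots,r$. Define $S^{\rho,\mathbf{m}}_N:=\#\{\mathbf{i}\in\{1,\dots,N\}^n: E_b(\mathbf{i})=m_b\text{ for all }b=1,\dots,r\}$ and $G^\rho_N(\mathbf{m}):=\frac{N^r}{N^{n+1}}S^{\rho,\mathbf{m}}_N$. $K_{\rho,u}:=\lim_{N\to\infty}G^\rho_N(\mathbf{0})$ is the Vandermonde expansion coefficient of $\rho$ for phases uniform on $[-\pi,\pi]$. *)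

theory Defs
  imports "HOL-Analysis.Analysis" "HOL-Library.FuncSet"
begin

definition is_partition :: "nat \<Rightarrow> nat \<Rightarrow> (nat \<Rightarrow> nat set) \<Rightarrow> bool" where
  "is_partition n r B \<longleftrightarrow>
     (\<forall>b\<in>{1..r}. B b \<noteq> {}) \<and>
     (\<forall>b\<in>{1..r}. \<forall>c\<in>{1..r}. b \<noteq> c \<longrightarrow> B b \<inter> B c = {}) \<and>
     (\<Union>b\<in>{1..r}. B b) = {1..n}"

text \<open>Index tuples i = (i_1,...,i_n) in {1..N}^n as extensional functions; i_0 := i_n.\<close>
definition idx_prev :: "nat \<Rightarrow> (nat \<Rightarrow> nat) \<Rightarrow> nat \<Rightarrow> nat" where
  "idx_prev n i k = (if k = 1 then i n else i (k - 1))"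

definition E_blk :: "nat \<Rightarrow> (nat \<Rightarrow> nat set) \<Rightarrow> (nat \<Rightarrow> nat) \<Rightarrow> nat \<Rightarrow> int" where
  "E_blk n B i b = (\<Sum>k\<in>B b. int (idx_prev n i k) - int (i k))"

definition S_count :: "nat \<Rightarrow> nat \<Rightarrow> (nat \<Rightarrow> nat set) \<Rightarrow> (nat \<Rightarrow> int) \<Rightarrow> nat \<Rightarrow> nat" where
  "S_count n r B m N = card {i \<in> {1..n} \<rightarrow>\<^sub>E {1..N}. \<forall>b\<in>{1..r}. E_blk n B i b = m b}"

definition G_fun :: "nat \<Rightarrow> nat \<Rightarrow> (nat \<Rightarrow> nat set) \<Rightarrow> nat \<Rightarrow> (nat \<Rightarrow> int) \<Rightarrow> real" where
  "G_fun n r B N m = (real N ^ r / real N ^ (n + 1)) * real (S_count n r B m N)"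

definition K_u :: "nat \<Rightarrow> nat \<Rightarrow> (nat \<Rightarrow> nat set) \<Rightarrow> real" where
  "K_u n r B = lim (\<lambda>N. G_fun n r B N (\<lambda>_. 0))"

end

theory Submission imports Defs begin

text \<open>
  A solution \<open>i\<close> of the block equations \<open>E_b(i) = m_b\<close> in \<open>{1..N}\<^sup>n\<close> is determined by one
  coordinate and its \<open>n - r\<close> cyclic differences off a set of block representatives, so fixing a
  coordinate leaves \<open>O(N\<^sup>n\<^sup>-\<^sup>r)\<close> solutions. Every \<open>m \<in> \<int>\<^sup>r\<^sub>0\<close> is the vector of block sums of
  some bounded integer vector \<open>v\<close>; translation by \<open>v\<close> matches the solutions for \<open>m\<close> with those for
  \<open>0\<close> except near the boundary of the cube, hence \<open>G\<^sub>N(m) - G\<^sub>N(0) = O(1/N)\<close>.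

  For the existence of \<open>lim G\<^sub>N(0)\<close>, write each index in \<open>{1..kN}\<close> with a low digit in \<open>{1..k}\<close>
  and a high digit in \<open>{1..N}\<close>. A solution for \<open>0\<close> at scale \<open>kN\<close> is a pattern \<open>t\<close> of low
  digits whose block sums are divisible by \<open>k\<close>, together with a solution at scale \<open>N\<close> for the
  bounded right-hand side \<open>-E(t)/k\<close>. Exactly \<open>k\<^sup>n\<^sup>-\<^sup>r\<^sup>+\<^sup>1\<close> patterns qualify, because the block sums
  of the low digits are equidistributed modulo \<open>k\<close>. With the first part this gives
  \<open>|G\<^sub>k\<^sub>N(0) - G\<^sub>N(0)| \<le> C/N\<close>, and \<open>G\<^sub>N(0)\<close> is a Cauchy sequence.
\<close>

section \<open>A Cauchy criterion\<close>

lemma convergent_if_mult_close: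
  fixes x :: "nat \<Rightarrow> real"
  assumes close: "\<And>k N. 0 < k \<Longrightarrow> 1 \<le> N \<Longrightarrow> \<bar>x (k * N) - x N\<bar> \<le> C / real N"
  shows "convergent x"
proof -
  have "Cauchy x"
  proof (rule metric_CauchyI)
    fix e :: real assume e: "0 < e"
    obtain M :: nat where M: "2 * \<bar>C\<bar> / e < real M"
      using reals_Archimedean2 by blast
    have "dist (x p) (x q) < e" if p: "M + 1 \<le> p" and q: "M + 1 \<le> q" for p q
    proof -
      have bound: "C / real s \<le> \<bar>C\<bar> / real (M + 1)" if "M + 1 \<le> s" for s
        using that by (intro order_trans[OF divide_right_mono[of C "\<bar>C\<bar>"]] divide_left_mono) auto
      have "dist (x p) (x q) \<le> \<bar>x (q * p) - x p\<bar> + \<bar>x (p * q) - x q\<bar>"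
        by (simp add: dist_real_def mult.commute)
      also have "\<dots> \<le> C / real p + C / real q"
        using p q by (intro add_mono close) auto
      also have "\<dots> \<le> 2 * \<bar>C\<bar> / real (M + 1)"
        using bound[OF p] bound[OF q] by simp
      also have "\<dots> < e"
        using M e by (simp add: field_simps)
      finally show ?thesis .
    qed
    then show "\<exists>M. \<forall>p\<ge>M. \<forall>q\<ge>M. dist (x p) (x q) < e"
      by blast
  qed
  then show ?thesis
    by (simp add: Cauchy_convergent_iff)
qed

section \<open>Cyclic differences\<close>

definition cyc_pred :: "nat \<Rightarrow> nat \<Rightarrow> nat" where
  "cyc_pred n k = (if k = 1 then n else k - 1)"

definition cyc_diff :: "nat \<Rightarrow> (nat \<Rightarrow> int) \<Rightarrow> nat \<Rightarrow> int" where
  "cyc_diff n x k = x (cyc_pred n k) - x k"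

definition block_diff :: "nat \<Rightarrow> (nat \<Rightarrow> nat set) \<Rightarrow> (nat \<Rightarrow> int) \<Rightarrow> nat \<Rightarrow> int" where
  "block_diff n B x b = (\<Sum>k\<in>B b. cyc_diff n x k)"

lemma cyc_pred_in_range: "k \<in> {1..n} \<Longrightarrow> cyc_pred n k \<in> {1..n}"
  by (auto simp: cyc_pred_def)

lemma bij_betw_cyc_pred: "bij_betw (cyc_pred n) {1..n} {1..n}"
proof (rule bij_betw_imageI)
  show "inj_on (cyc_pred n) {1..n}"
    by (auto simp: inj_on_def cyc_pred_def)
  have "k \<in> cyc_pred n ` {1..n}" if "k \<in> {1..n}" for k
  proof (cases "k = n")
    case True
    with that show ?thesis by (intro image_eqI[of _ _ 1]) (auto simp: cyc_pred_def)
  next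
    case False
    with that show ?thesis by (intro image_eqI[of _ _ "k + 1"]) (auto simp: cyc_pred_def)
  qed
  then show "cyc_pred n ` {1..n} = {1..n}"
    using cyc_pred_in_range by (intro subset_antisym) auto
qed

lemma sum_cyc_diff_eq_0: "(\<Sum>k=1..n. cyc_diff n x k) = 0"
  using sum.reindex_bij_betw[OF bij_betw_cyc_pred, of x]
  by (simp add: cyc_diff_def sum_subtractf)

lemma cyc_pred_invariant_const:
  assumes inv: "\<And>k. k \<in> {1..n} \<Longrightarrow> f (cyc_pred n k) = f k"
    and "j \<in> {1..n}" and "k \<in> {1..n}"
  shows "f j = f k"
proof -
  have key: "f k = f 1" if "1 \<le> k" "k \<le> n" for k
    using that
  proof (induction k)
    case (Suc k)
    show ?case
    proof (cases "k = 0")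
      case False
      have "f (Suc k) = f (cyc_pred n (Suc k))"
        using Suc.prems by (intro inv[symmetric]) simp
      also have "\<dots> = f k"
        using False by (simp add: cyc_pred_def)
      also have "\<dots> = f 1"
        using Suc False by simp
      finally show ?thesis .
    qed simp
  qed simp
  show ?thesis
    using key[of j] key[of k] assms(2,3) by simp
qed

lemma E_blk_eq_block_diff: "E_blk n B i b = block_diff n B (int \<circ> i) b"
  unfolding E_blk_def block_diff_def cyc_diff_def idx_prev_def cyc_pred_def
  by (rule sum.cong) auto

lemma block_diff_add: "block_diff n B (\<lambda>k. x k + y k) b = block_diff n B x b + block_diff n B y b"
  by (simp add: block_diff_def cyc_diff_def sum.distrib[symmetric] algebra_simps)

lemma block_diff_diff: "block_diff n B (\<lambda>k. x k - y k) b = block_diff n B x b - block_diff n B y b"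
  by (simp add: block_diff_def cyc_diff_def sum_subtractf[symmetric] algebra_simps)

lemma block_diff_cmult: "block_diff n B (\<lambda>k. c * x k) b = c * block_diff n B x b"
  by (simp add: block_diff_def cyc_diff_def sum_distrib_left algebra_simps)

lemma block_diff_neg: "block_diff n B (\<lambda>k. - x k) b = - block_diff n B x b"
  by (simp add: block_diff_def cyc_diff_def sum_negf[symmetric])

lemma block_diff_const: "block_diff n B (\<lambda>_. c) b = 0"
  by (simp add: block_diff_def cyc_diff_def)

lemma block_diff_cong:
  assumes "B b \<subseteq> {1..n}" and "\<And>k. k \<in> {1..n} \<Longrightarrow> x k = y k"
  shows "block_diff n B x b = block_diff n B y b"
  unfolding block_diff_def cyc_diff_def
  using assms cyc_pred_in_range by (intro sum.cong) auto

section \<open>Index cubes\<close>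

definition cube :: "nat \<Rightarrow> nat \<Rightarrow> (nat \<Rightarrow> nat) set" where
  "cube n N = {1..n} \<rightarrow>\<^sub>E {1..N}"

lemma finite_cube [simp]: "finite (cube n N)"
  by (simp add: cube_def finite_PiE)

lemma card_cube: "card (cube n N) = N ^ n"
  by (simp add: cube_def card_PiE)

lemma cube_eq_iff: "i \<in> cube n N \<Longrightarrow> i' \<in> cube n N \<Longrightarrow> i = i' \<longleftrightarrow> (\<forall>j\<in>{1..n}. i j = i' j)"
  unfolding cube_def by (auto intro: PiE_ext)

lemma cube_mem: "i \<in> cube n N \<Longrightarrow> j \<in> {1..n} \<Longrightarrow> i j \<in> {1..N}"
  unfolding cube_def by (rule PiE_mem)

lemma restrict_eq_cube:
  "i \<in> cube n N \<Longrightarrow> (\<And>j. j \<in> {1..n} \<Longrightarrow> f j = i j) \<Longrightarrow> (\<lambda>j\<in>{1..n}. f j) = i"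
  unfolding cube_def by (metis PiE_restrict restrict_ext)

lemma abs_cyc_diff_le:
  assumes "i \<in> cube n N" and "k \<in> {1..n}"
  shows "\<bar>cyc_diff n (int \<circ> i) k\<bar> \<le> int N"
proof -
  have "i k \<le> N" "i (cyc_pred n k) \<le> N"
    using assms cyc_pred_in_range[OF assms(2)] by (auto simp: cube_def)
  then show ?thesis unfolding cyc_diff_def comp_apply by linarith
qed

lemma cube_eq_of_cyc_diff_eq:
  assumes "i \<in> cube n N" "i' \<in> cube n N" "j \<in> {1..n}" "i j = i' j"
    and "\<And>k. k \<in> {1..n} \<Longrightarrow> cyc_diff n (int \<circ> i) k = cyc_diff n (int \<circ> i') k"
  shows "i = i'"
proof -
  have "int (i (cyc_pred n k)) - int (i' (cyc_pred n k)) = int (i k) - int (i' k)"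
    if "k \<in> {1..n}" for k
    using assms(5)[OF that] unfolding cyc_diff_def comp_apply by linarith
  then have "int (i k) - int (i' k) = int (i j) - int (i' j)" if "k \<in> {1..n}" for k
    using cyc_pred_invariant_const[where f = "\<lambda>k. int (i k) - int (i' k)", OF _ that assms(3)]
    by simp
  then have "i k = i' k" if "k \<in> {1..n}" for k
    using that assms(4) by simp
  then show ?thesis
    using cube_eq_iff[OF assms(1,2)] by blast
qed

definition join :: "nat \<Rightarrow> nat \<Rightarrow> (nat \<Rightarrow> nat) \<Rightarrow> (nat \<Rightarrow> nat) \<Rightarrow> nat \<Rightarrow> nat" where
  "join n k t g = (\<lambda>j\<in>{1..n}. k * (g j - 1) + t j)"

definition low_digits :: "nat \<Rightarrow> nat \<Rightarrow> (nat \<Rightarrow> nat) \<Rightarrow> nat \<Rightarrow> nat" where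
  "low_digits n k i = (\<lambda>j\<in>{1..n}. (i j - 1) mod k + 1)"

definition high_digits :: "nat \<Rightarrow> nat \<Rightarrow> (nat \<Rightarrow> nat) \<Rightarrow> nat \<Rightarrow> nat" where
  "high_digits n k i = (\<lambda>j\<in>{1..n}. (i j - 1) div k + 1)"

lemma join_in_cube:
  assumes t: "t \<in> cube n k" and g: "g \<in> cube n N"
  shows "join n k t g \<in> cube n (k * N)"
proof -
  have "k * (g j - 1) + t j \<in> {1..k * N}" if "j \<in> {1..n}" for j
  proof -
    have "k * (g j - 1) + t j \<le> k * (N - 1) + k"
      using cube_mem[OF t that] cube_mem[OF g that] by (intro add_mono mult_left_mono) auto
    also have "\<dots> = k * N"
      using cube_mem[OF g that] by (cases N) (auto simp: algebra_simps)
    finally show ?thesis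
      using cube_mem[OF t that] by simp
  qed
  then show ?thesis
    by (simp add: join_def cube_def)
qed

lemma digits_in_cube:
  assumes k: "0 < k" and i: "i \<in> cube n (k * N)"
  shows "low_digits n k i \<in> cube n k" and "high_digits n k i \<in> cube n N"
proof -
  show "low_digits n k i \<in> cube n k"
    using k by (auto simp: low_digits_def cube_def Suc_le_eq)
  have "(i j - 1) div k < N" if "j \<in> {1..n}" for j
    using cube_mem[OF i that] by (intro less_mult_imp_div_less) (auto simp: mult.commute)
  then show "high_digits n k i \<in> cube n N"
    by (auto simp: high_digits_def cube_def Suc_le_eq)
qed

lemma digits_join:
  assumes k: "0 < k" and t: "t \<in> cube n k" and g: "g \<in> cube n N"
  shows "low_digits n k (join n k t g) = t" and "high_digits n k (join n k t g) = g"
proof -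
  have digits: "(k * (c - 1) + a - 1) mod k + 1 = a \<and> (k * (c - 1) + a - 1) div k + 1 = c"
    if "a \<in> {1..k}" "c \<in> {1..N}" for a c
  proof -
    define a' c' where "a' = a - 1" and "c' = c - 1"
    then have "a = Suc a'" "c = Suc c'" "a' < k"
      using that by auto
    with k show ?thesis
      by simp
  qed
  show "low_digits n k (join n k t g) = t"
    unfolding low_digits_def using digits cube_mem[OF t] cube_mem[OF g]
    by (intro restrict_eq_cube[OF t]) (simp add: join_def)
  show "high_digits n k (join n k t g) = g"
    unfolding high_digits_def using digits cube_mem[OF t] cube_mem[OF g]
    by (intro restrict_eq_cube[OF g]) (simp add: join_def)
qed

lemma join_digits:
  assumes i: "i \<in> cube n (k * N)"
  shows "join n k (low_digits n k i) (high_digits n k i) = i"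
  unfolding join_def
proof (rule restrict_eq_cube[OF i])
  fix j assume j: "j \<in> {1..n}"
  have "k * ((i j - 1) div k) + ((i j - 1) mod k + 1) = i j"
    using cube_mem[OF i j] div_mult_mod_eq[of "i j - 1" k] by (simp add: mult.commute)
  then show "k * (high_digits n k i j - 1) + low_digits n k i j = i j"
    using j by (simp only: low_digits_def high_digits_def restrict_apply' add_diff_cancel_right')
qed

lemma bij_betw_join:
  assumes "0 < k"
  shows "bij_betw (\<lambda>(t, g). join n k t g) (cube n k \<times> cube n N) (cube n (k * N))"
  by (rule bij_betw_byWitness[where f' = "\<lambda>i. (low_digits n k i, high_digits n k i)"])
    (use assms in \<open>auto simp: digits_join join_digits digits_in_cube join_in_cube\<close>)

lemma E_blk_join:
  assumes t: "t \<in> cube n k" and g: "g \<in> cube n N" and "B b \<subseteq> {1..n}"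
  shows "E_blk n B (join n k t g) b = int k * E_blk n B g b + E_blk n B t b"
proof -
  have "E_blk n B (join n k t g) b = block_diff n B (\<lambda>j. int k * (int (g j) - 1) + int (t j)) b"
    unfolding E_blk_eq_block_diff using assms(3) cube_mem[OF g]
    by (intro block_diff_cong) (auto simp: join_def of_nat_diff)
  then show ?thesis
    by (simp add: E_blk_eq_block_diff block_diff_add block_diff_cmult block_diff_diff
        block_diff_const comp_def)
qed

definition translate :: "nat \<Rightarrow> (nat \<Rightarrow> int) \<Rightarrow> (nat \<Rightarrow> nat) \<Rightarrow> nat \<Rightarrow> nat" where
  "translate n v i = (\<lambda>j\<in>{1..n}. nat (int (i j) + v j))"

lemma E_blk_translate:
  assumes "B b \<subseteq> {1..n}" and "\<And>j. j \<in> {1..n} \<Longrightarrow> 0 \<le> int (i j) + v j"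
  shows "E_blk n B (translate n v i) b = E_blk n B i b + block_diff n B v b"
proof -
  have "E_blk n B (translate n v i) b = block_diff n B (\<lambda>j. int (i j) + v j) b"
    unfolding E_blk_eq_block_diff using assms by (intro block_diff_cong) (auto simp: translate_def)
  then show ?thesis
    by (simp add: block_diff_add E_blk_eq_block_diff comp_def)
qed

definition shift_mod :: "nat \<Rightarrow> nat \<Rightarrow> (nat \<Rightarrow> int) \<Rightarrow> (nat \<Rightarrow> nat) \<Rightarrow> nat \<Rightarrow> nat" where
  "shift_mod n k v t = (\<lambda>j\<in>{1..n}. nat ((int (t j) - 1 + v j) mod int k) + 1)"

lemma shift_mod_in_cube:
  assumes "0 < k"
  shows "shift_mod n k v t \<in> cube n k"
proof -
  have "nat (x mod int k) < k" for x
    using assms by (simp add: nat_less_iff)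
  then show ?thesis
    by (auto simp: shift_mod_def cube_def Suc_le_eq)
qed

lemma inj_on_shift_mod:
  assumes k: "0 < k"
  shows "inj_on (shift_mod n k v) (cube n k)"
proof (rule inj_onI)
  fix t t' assume t: "t \<in> cube n k" and t': "t' \<in> cube n k" and eq: "shift_mod n k v t = shift_mod n k v t'"
  have "t j = t' j" if j: "j \<in> {1..n}" for j
  proof -
    have "(int (t j) - 1 + v j) mod int k = (int (t' j) - 1 + v j) mod int k"
      using fun_cong[OF eq, of j] j k by (simp add: shift_mod_def eq_nat_nat_iff)
    then have "(int (t j) - 1) mod int k = (int (t' j) - 1) mod int k"
      by (metis add_diff_cancel_right' mod_diff_left_eq)
    moreover have "t j \<in> {1..k}" "t' j \<in> {1..k}"
      using cube_mem[OF t j] cube_mem[OF t' j] .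
    ultimately show ?thesis
      by (simp add: of_nat_diff)
  qed
  then show "t = t'"
    using cube_eq_iff[OF t t'] by blast
qed

lemma E_blk_shift_mod:
  assumes k: "0 < k" and "B b \<subseteq> {1..n}"
  shows "E_blk n B (shift_mod n k v t) b mod int k = (E_blk n B t b + block_diff n B v b) mod int k"
proof -
  define q where "q j = (int (t j) - 1 + v j) div int k" for j
  have "E_blk n B (shift_mod n k v t) b = block_diff n B (\<lambda>j. int (t j) + v j - int k * q j) b"
    unfolding E_blk_eq_block_diff using assms(2)
  proof (rule block_diff_cong)
    fix j assume "j \<in> {1..n}"
    then have "int (shift_mod n k v t j) = (int (t j) - 1 + v j) mod int k + 1"
      using k by (simp add: shift_mod_def)
    then show "(int \<circ> shift_mod n k v t) j = int (t j) + v j - int k * q j"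
      unfolding q_def by (simp add: mod_div_mult_eq[symmetric] algebra_simps)
  qed
  also have "\<dots> = E_blk n B t b + block_diff n B v b - int k * block_diff n B q b"
    by (simp add: block_diff_add block_diff_diff block_diff_cmult E_blk_eq_block_diff comp_def)
  finally show ?thesis
    by (simp add: mod_diff_right_eq[symmetric])
qed

section \<open>Partitions and block sums\<close>

locale block_partition =
  fixes n r :: nat and B :: "nat \<Rightarrow> nat set"
  assumes partition: "is_partition n r B" and n_pos: "1 \<le> n"
begin

lemma block_nonempty: "b \<in> {1..r} \<Longrightarrow> B b \<noteq> {}"
  using partition by (auto simp: is_partition_def)

lemma blocks_disjoint: "b \<in> {1..r} \<Longrightarrow> c \<in> {1..r} \<Longrightarrow> b \<noteq> c \<Longrightarrow> B b \<inter> B c = {}"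
  using partition by (auto simp: is_partition_def)

lemma Union_blocks: "(\<Union>b\<in>{1..r}. B b) = {1..n}"
  using partition by (auto simp: is_partition_def)

lemma block_subset: "b \<in> {1..r} \<Longrightarrow> B b \<subseteq> {1..n}"
  using Union_blocks by auto

lemma finite_block: "b \<in> {1..r} \<Longrightarrow> finite (B b)"
  using block_subset finite_subset by blast

definition rep :: "nat \<Rightarrow> nat" where
  "rep b = (SOME k. k \<in> B b)"

lemma rep_in_block: "b \<in> {1..r} \<Longrightarrow> rep b \<in> B b"
  unfolding rep_def using block_nonempty by (simp add: some_in_eq)

lemma rep_in_block_iff: "b \<in> {1..r} \<Longrightarrow> c \<in> {1..r} \<Longrightarrow> rep c \<in> B b \<longleftrightarrow> c = b"
  using rep_in_block blocks_disjoint by blast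

lemma rep_in_range: "b \<in> {1..r} \<Longrightarrow> rep b \<in> {1..n}"
  using rep_in_block block_subset by blast

lemma inj_on_rep: "inj_on rep {1..r}"
  by (rule inj_onI) (metis rep_in_block rep_in_block_iff)

lemma card_reps: "card (rep ` {1..r}) = r"
  using card_image[OF inj_on_rep] by simp

lemma card_non_reps: "card ({1..n} - rep ` {1..r}) = n - r"
proof -
  have "card ({1..n} - rep ` {1..r}) = card {1..n} - card (rep ` {1..r})"
    using rep_in_range by (intro card_Diff_subset) auto
  then show ?thesis
    unfolding card_reps by simp
qed

lemma r_le_n: "r \<le> n"
proof -
  have "card (rep ` {1..r}) \<le> card {1..n}"
    using rep_in_range by (intro card_mono) auto
  then show ?thesis
    unfolding card_reps by simp
qed

lemma r_pos: "1 \<le> r"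
  using Union_blocks n_pos by (cases r) auto

lemma sum_block_diff_eq_0: "(\<Sum>b=1..r. block_diff n B x b) = 0"
proof -
  have "(\<Sum>b=1..r. block_diff n B x b) = (\<Sum>k\<in>(\<Union>b\<in>{1..r}. B b). cyc_diff n x k)"
    unfolding block_diff_def
    by (rule sum.UNION_disjoint[symmetric]) (use finite_block blocks_disjoint in auto)
  also have "\<dots> = 0"
    unfolding Union_blocks by (rule sum_cyc_diff_eq_0)
  finally show ?thesis .
qed

text \<open>Minus the partial sums of \<open>w\<close> along the representatives: the cyclic differences of this
  vector are \<open>w b\<close> at \<open>rep b\<close> and vanish elsewhere, which makes \<open>w\<close> its vector of block sums.\<close>
definition rep_partial_sum :: "(nat \<Rightarrow> int) \<Rightarrow> nat \<Rightarrow> int" where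
  "rep_partial_sum w k = - (\<Sum>c=1..r. if rep c \<le> k then w c else 0)"

lemma abs_rep_partial_sum_le: "\<bar>rep_partial_sum w k\<bar> \<le> (\<Sum>b=1..r. \<bar>w b\<bar>)"
proof -
  have "\<bar>rep_partial_sum w k\<bar> \<le> (\<Sum>c=1..r. \<bar>if rep c \<le> k then w c else 0\<bar>)"
    unfolding rep_partial_sum_def abs_minus_cancel by (rule sum_abs)
  also have "\<dots> \<le> (\<Sum>b=1..r. \<bar>w b\<bar>)"
    by (rule sum_mono) auto
  finally show ?thesis .
qed

lemma cyc_diff_rep_partial_sum:
  assumes sum_w: "(\<Sum>b=1..r. w b) = 0" and k: "k \<in> {1..n}"
  shows "cyc_diff n (rep_partial_sum w) k = (\<Sum>c=1..r. if rep c = k then w c else 0)"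
proof (cases "k = 1")
  case True
  have "rep_partial_sum w n = - (\<Sum>c=1..r. w c)"
    unfolding rep_partial_sum_def using rep_in_range
    by (intro arg_cong[where f = uminus] sum.cong) auto
  moreover have "rep_partial_sum w 1 = - (\<Sum>c=1..r. if rep c = 1 then w c else 0)"
    unfolding rep_partial_sum_def using rep_in_range
    by (intro arg_cong[where f = uminus] sum.cong) fastforce+
  ultimately show ?thesis
    using True sum_w by (simp add: cyc_diff_def cyc_pred_def)
next
  case False
  have "rep_partial_sum w (k - 1) - rep_partial_sum w k
      = (\<Sum>c=1..r. (if rep c \<le> k then w c else 0) - (if rep c \<le> k - 1 then w c else 0))"
    unfolding rep_partial_sum_def by (simp add: sum_subtractf)
  also have "\<dots> = (\<Sum>c=1..r. if rep c = k then w c else 0)"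
    using False k by (intro sum.cong) auto
  finally show ?thesis
    using False by (simp add: cyc_diff_def cyc_pred_def)
qed

lemma block_diff_rep_partial_sum:
  assumes sum_w: "(\<Sum>b=1..r. w b) = 0" and b: "b \<in> {1..r}"
  shows "block_diff n B (rep_partial_sum w) b = w b"
proof -
  have "block_diff n B (rep_partial_sum w) b = (\<Sum>k\<in>B b. \<Sum>c=1..r. if rep c = k then w c else 0)"
    unfolding block_diff_def using cyc_diff_rep_partial_sum[OF sum_w] block_subset[OF b]
    by (intro sum.cong) auto
  also have "\<dots> = (\<Sum>c=1..r. \<Sum>k\<in>B b. if rep c = k then w c else 0)"
    by (rule sum.swap)
  also have "\<dots> = (\<Sum>c=1..r. if c = b then w c else 0)"
    using finite_block[OF b] rep_in_block_iff[OF b] by (intro sum.cong) (auto simp: sum.delta)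
  also have "\<dots> = w b"
    using b by simp
  finally show ?thesis .
qed

lemma exists_block_diff_eq:
  assumes "(\<Sum>b=1..r. w b) = 0"
  shows "\<exists>v. (\<forall>b\<in>{1..r}. block_diff n B v b = w b) \<and> (\<forall>k. \<bar>v k\<bar> \<le> (\<Sum>b=1..r. \<bar>w b\<bar>))"
  using block_diff_rep_partial_sum[OF assms] abs_rep_partial_sum_le by blast

section \<open>Counting solutions\<close>

definition sols :: "(nat \<Rightarrow> int) \<Rightarrow> nat \<Rightarrow> (nat \<Rightarrow> nat) set" where
  "sols w N = {i \<in> cube n N. \<forall>b\<in>{1..r}. E_blk n B i b = w b}"

lemma finite_sols [simp]: "finite (sols w N)"
  by (simp add: sols_def)

lemma sols_subset_cube: "sols w N \<subseteq> cube n N"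
  by (auto simp: sols_def)

lemma G_fun_eq: "1 \<le> N \<Longrightarrow> G_fun n r B N w = real (card (sols w N)) / real N ^ (n - r + 1)"
proof -
  assume "1 \<le> N"
  have "real N ^ (n + 1) = real N ^ r * real N ^ (n - r + 1)"
    using r_le_n by (simp flip: power_add)
  with \<open>1 \<le> N\<close> show ?thesis
    by (simp add: G_fun_def S_count_def sols_def cube_def)
qed

text \<open>The block equations force the cyclic difference at the representative of each block.\<close>
lemma cyc_diff_eq_of_eq_off_reps:
  assumes i: "i \<in> sols w N" and i': "i' \<in> sols w N"
    and off: "\<And>k. k \<in> {1..n} - rep ` {1..r} \<Longrightarrow> cyc_diff n (int \<circ> i) k = cyc_diff n (int \<circ> i') k"
    and k: "k \<in> {1..n}"
  shows "cyc_diff n (int \<circ> i) k = cyc_diff n (int \<circ> i') k"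
proof (cases "k \<in> rep ` {1..r}")
  case True
  then obtain b where b: "b \<in> {1..r}" and kb: "k = rep b" by blast
  have k_in: "k \<in> B b"
    using rep_in_block[OF b] kb by simp
  have rest: "(\<Sum>l\<in>B b - {k}. cyc_diff n (int \<circ> i) l) = (\<Sum>l\<in>B b - {k}. cyc_diff n (int \<circ> i') l)"
  proof (rule sum.cong)
    fix l assume l: "l \<in> B b - {k}"
    then have "l \<notin> rep ` {1..r}"
      using rep_in_block_iff[OF b] kb by fastforce
    with l block_subset[OF b] show "cyc_diff n (int \<circ> i) l = cyc_diff n (int \<circ> i') l"
      by (intro off) auto
  qed simp
  have "block_diff n B (int \<circ> i) b = block_diff n B (int \<circ> i') b"
    using i i' b by (simp add: sols_def E_blk_eq_block_diff)
  with rest show ?thesis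
    unfolding block_diff_def
    by (simp add: sum.remove[OF finite_block[OF b] k_in])
qed (use k off in blast)

lemma card_sols_coord_le:
  assumes j: "j \<in> {1..n}"
  shows "card {i \<in> sols w N. i j = c} \<le> (2 * N + 1) ^ (n - r)"
proof -
  define C where "C = {1..n} - rep ` {1..r}"
  define \<Phi> where "\<Phi> i = restrict (cyc_diff n (int \<circ> i)) C" for i
  let ?S = "{i \<in> sols w N. i j = c}"
  have "\<Phi> ` ?S \<subseteq> C \<rightarrow>\<^sub>E {- int N..int N}"
    using abs_cyc_diff_le sols_subset_cube
    by (fastforce simp: \<Phi>_def C_def abs_le_iff)
  moreover have "inj_on \<Phi> ?S"
  proof (rule inj_onI)
    fix i i' assume i: "i \<in> ?S" and i': "i' \<in> ?S" and eq: "\<Phi> i = \<Phi> i'"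
    have "cyc_diff n (int \<circ> i) k = cyc_diff n (int \<circ> i') k" if "k \<in> C" for k
      using fun_cong[OF eq, of k] that by (simp add: \<Phi>_def)
    then have "cyc_diff n (int \<circ> i) k = cyc_diff n (int \<circ> i') k" if "k \<in> {1..n}" for k
      using i i' that cyc_diff_eq_of_eq_off_reps[of i w N i'] by (simp add: C_def)
    with i i' j sols_subset_cube show "i = i'"
      by (intro cube_eq_of_cyc_diff_eq[of i n N i' j]) auto
  qed
  ultimately have "card ?S \<le> card (C \<rightarrow>\<^sub>E {- int N..int N})"
    by (intro card_inj_on_le) (auto simp: C_def finite_PiE)
  also have "\<dots> = nat (2 * int N + 1) ^ (n - r)"
    using card_non_reps by (simp add: card_PiE C_def)
  also have "nat (2 * int N + 1) = 2 * N + 1"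
    by simp
  finally show ?thesis .
qed

lemma card_sols_touching_le:
  assumes "finite L"
  shows "card {i \<in> sols w N. \<exists>j\<in>{1..n}. i j \<in> L} \<le> n * card L * (2 * N + 1) ^ (n - r)"
proof -
  have "{i \<in> sols w N. \<exists>j\<in>{1..n}. i j \<in> L} = (\<Union>j\<in>{1..n}. \<Union>c\<in>L. {i \<in> sols w N. i j = c})"
    by blast
  also have "card \<dots> \<le> (\<Sum>j=1..n. card (\<Union>c\<in>L. {i \<in> sols w N. i j = c}))"
    by (rule card_UN_le) simp
  also have "\<dots> \<le> (\<Sum>j=1..n. \<Sum>c\<in>L. card {i \<in> sols w N. i j = c})"
    using assms by (intro sum_mono card_UN_le)
  also have "\<dots> \<le> (\<Sum>j=1..n. \<Sum>c\<in>L. (2 * N + 1) ^ (n - r))"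
    using card_sols_coord_le by (intro sum_mono) auto
  also have "\<dots> = n * card L * (2 * N + 1) ^ (n - r)"
    by simp
  finally show ?thesis .
qed

lemma card_sols_interior_le:
  assumes v: "\<forall>b\<in>{1..r}. block_diff n B v b = w' b - w b" and V: "\<forall>k. \<bar>v k\<bar> \<le> int V"
  shows "card {i \<in> sols w N. \<forall>j\<in>{1..n}. V < i j \<and> i j + V \<le> N} \<le> card (sols w' N)"
proof -
  let ?I = "{i \<in> sols w N. \<forall>j\<in>{1..n}. V < i j \<and> i j + V \<le> N}"
  have shifted: "1 \<le> int (i j) + v j \<and> int (i j) + v j \<le> int N" if "i \<in> ?I" "j \<in> {1..n}" for i j
  proof -
    have "V < i j" "i j + V \<le> N"
      using that by auto
    then show ?thesis
      using V[rule_format, of j] by linarith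
  qed
  have "translate n v i \<in> sols w' N" if i: "i \<in> ?I" for i
  proof -
    have "translate n v i \<in> cube n N"
      unfolding translate_def cube_def
    proof (intro restrict_PiE_iff[THEN iffD2] ballI)
      fix j assume "j \<in> {1..n}"
      from shifted[OF i this] show "nat (int (i j) + v j) \<in> {1..N}"
        by (auto simp: le_nat_iff nat_le_iff)
    qed
    moreover have "E_blk n B (translate n v i) b = w' b" if b: "b \<in> {1..r}" for b
    proof -
      have "E_blk n B (translate n v i) b = E_blk n B i b + block_diff n B v b"
      proof (rule E_blk_translate[where B = B and b = b, OF block_subset[OF b]])
        fix j assume "j \<in> {1..n}"
        from shifted[OF i this] show "0 \<le> int (i j) + v j"
          by linarith
      qed
      with i b v show ?thesis
        by (simp add: sols_def)
    qed
    ultimately show ?thesis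
      by (simp add: sols_def)
  qed
  moreover have "inj_on (translate n v) ?I"
  proof (rule inj_onI)
    fix i i' assume i: "i \<in> ?I" and i': "i' \<in> ?I" and eq: "translate n v i = translate n v i'"
    have "i j = i' j" if "j \<in> {1..n}" for j
    proof -
      have "nat (int (i j) + v j) = nat (int (i' j) + v j)"
        using fun_cong[OF eq, of j] that by (simp add: translate_def)
      with shifted[OF i that] shifted[OF i' that] show ?thesis
        by (subst (asm) eq_nat_nat_iff) auto
    qed
    with i i' sols_subset_cube show "i = i'"
      by (subst cube_eq_iff) auto
  qed
  ultimately show ?thesis
    by (intro card_inj_on_le) auto
qed

lemma card_sols_le_shift:
  assumes "\<forall>b\<in>{1..r}. block_diff n B v b = w' b - w b" and "\<forall>k. \<bar>v k\<bar> \<le> int V"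
  shows "card (sols w N) \<le> card (sols w' N) + n * (2 * V) * (2 * N + 1) ^ (n - r)"
proof -
  define L where "L = {1..V} \<union> {N - V<..N}"
  have card_L: "card L \<le> 2 * V"
    unfolding L_def using card_Un_le[of "{1..V}" "{N - V<..N}"] by simp
  let ?I = "{i \<in> sols w N. \<forall>j\<in>{1..n}. V < i j \<and> i j + V \<le> N}"
  let ?T = "{i \<in> sols w N. \<exists>j\<in>{1..n}. i j \<in> L}"
  have "i \<in> ?I \<union> ?T" if i: "i \<in> sols w N" for i
  proof (cases "\<forall>j\<in>{1..n}. V < i j \<and> i j + V \<le> N")
    case False
    then obtain j where j: "j \<in> {1..n}" "\<not> (V < i j \<and> i j + V \<le> N)"
      by blast
    moreover have "i j \<in> {1..N}"
      using i j(1) sols_subset_cube by (blast intro: cube_mem)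
    ultimately have "i j \<in> L"
      by (auto simp: L_def)
    with i j show ?thesis by blast
  qed (use i in blast)
  then have "card (sols w N) \<le> card (?I \<union> ?T)"
    by (intro card_mono) auto
  also have "\<dots> \<le> card ?I + card ?T"
    by (rule card_Un_le)
  also have "\<dots> \<le> card (sols w' N) + n * card L * (2 * N + 1) ^ (n - r)"
    using card_sols_interior_le[OF assms] card_sols_touching_le[of L] by (intro add_mono) (auto simp: L_def)
  also have "\<dots> \<le> card (sols w' N) + n * (2 * V) * (2 * N + 1) ^ (n - r)"
    using card_L by simp
  finally show ?thesis .
qed

lemma card_sols_close_to_0:
  assumes sum_w: "(\<Sum>b=1..r. w b) = 0" and w_le: "\<forall>b\<in>{1..r}. \<bar>w b\<bar> \<le> int M" and N: "1 \<le> N"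
  shows "\<bar>real (card (sols w N)) - real (card (sols (\<lambda>_. 0) N))\<bar>
           \<le> real (2 * n * r * M) * 3 ^ (n - r) * real N ^ (n - r)"
proof -
  obtain v where v: "\<forall>b\<in>{1..r}. block_diff n B v b = w b"
    and v_le: "\<forall>k. \<bar>v k\<bar> \<le> (\<Sum>b=1..r. \<bar>w b\<bar>)"
    using exists_block_diff_eq[OF sum_w] by blast
  have "(\<Sum>b=1..r. \<bar>w b\<bar>) \<le> (\<Sum>b=1..r. int M)"
    using w_le by (intro sum_mono) auto
  then have V: "\<forall>k. \<bar>v k\<bar> \<le> int (r * M)"
    using v_le by (auto intro: order_trans)
  define K where "K = n * (2 * (r * M)) * (2 * N + 1) ^ (n - r)"
  have "card (sols (\<lambda>_. 0) N) \<le> card (sols w N) + K"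
    unfolding K_def using v V by (intro card_sols_le_shift) auto
  moreover have "card (sols w N) \<le> card (sols (\<lambda>_. 0) N) + K"
    unfolding K_def using v V by (intro card_sols_le_shift[of "\<lambda>k. - v k"]) (auto simp: block_diff_neg)
  ultimately have "\<bar>real (card (sols w N)) - real (card (sols (\<lambda>_. 0) N))\<bar> \<le> real K"
    by (simp add: abs_le_iff flip: of_nat_add)
  also have "\<dots> = real (2 * n * r * M) * real (2 * N + 1) ^ (n - r)"
    by (simp add: K_def)
  also have "\<dots> \<le> real (2 * n * r * M) * (3 * real N) ^ (n - r)"
    using N by (intro mult_left_mono power_mono) auto
  finally show ?thesis
    by (simp add: power_mult_distrib mult.assoc)
qed

lemma tendsto_G_fun_minus_G_fun_0:
  assumes sum_w: "(\<Sum>b=1..r. w b) = 0"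
  shows "(\<lambda>N. G_fun n r B N w - G_fun n r B N (\<lambda>_. 0)) \<longlonglongrightarrow> 0"
proof (rule Lim_null_comparison)
  define M where "M = nat (\<Sum>b=1..r. \<bar>w b\<bar>)"
  define C where "C = real (2 * n * r * M) * 3 ^ (n - r)"
  have w_le: "\<forall>b\<in>{1..r}. \<bar>w b\<bar> \<le> int M"
    using member_le_sum[of _ "{1..r}" "\<lambda>b. \<bar>w b\<bar>"] by (auto simp: M_def)
  have "norm (G_fun n r B N w - G_fun n r B N (\<lambda>_. 0)) \<le> C / real N" if N: "1 \<le> N" for N
  proof -
    have "norm (G_fun n r B N w - G_fun n r B N (\<lambda>_. 0))
        = \<bar>real (card (sols w N)) - real (card (sols (\<lambda>_. 0) N))\<bar> / real N ^ (n - r + 1)"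
      using N by (simp add: G_fun_eq abs_divide flip: diff_divide_distrib)
    also have "\<dots> \<le> C * real N ^ (n - r) / real N ^ (n - r + 1)"
      using card_sols_close_to_0[OF sum_w w_le N] N by (intro divide_right_mono) (auto simp: C_def)
    also have "\<dots> = C / real N"
      using N by simp
    finally show ?thesis .
  qed
  then show "\<forall>\<^sub>F N in sequentially. norm (G_fun n r B N w - G_fun n r B N (\<lambda>_. 0)) \<le> C / real N"
    by (intro eventually_sequentiallyI[of 1])
  show "(\<lambda>N. C / real N) \<longlonglongrightarrow> 0"
    by (rule lim_const_over_n)
qed

section \<open>Self-similarity of the homogeneous count\<close>

definition dvd_sols :: "nat \<Rightarrow> (nat \<Rightarrow> nat) set" where
  "dvd_sols k = {t \<in> cube n k. \<forall>b\<in>{1..r}. int k dvd E_blk n B t b}"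

definition carry :: "nat \<Rightarrow> (nat \<Rightarrow> nat) \<Rightarrow> nat \<Rightarrow> int" where
  "carry k t b = - (E_blk n B t b div int k)"

lemma join_in_sols_0_iff:
  assumes "0 < k" "t \<in> cube n k" "g \<in> cube n N"
  shows "join n k t g \<in> sols (\<lambda>_. 0) (k * N) \<longleftrightarrow> t \<in> dvd_sols k \<and> g \<in> sols (carry k t) N"
proof -
  have "join n k t g \<in> cube n (k * N)"
    using bij_betw_imp_surj_on[OF bij_betw_join[OF assms(1)]] assms(2,3) by blast
  moreover have "int k * x + y = 0 \<longleftrightarrow> int k dvd y \<and> x = - (y div int k)" for x y :: int
  proof
    assume "int k * x + y = 0"
    then have "y = int k * (- x)"
      by simp
    with assms(1) show "int k dvd y \<and> x = - (y div int k)"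
      by (simp del: mult_minus_right)
  qed auto
  ultimately show ?thesis
    using assms block_subset by (auto simp: sols_def dvd_sols_def carry_def E_blk_join)
qed

lemma card_sols_0_mult:
  assumes "0 < k"
  shows "card (sols (\<lambda>_. 0) (k * N)) = (\<Sum>t\<in>dvd_sols k. card (sols (carry k t) N))"
proof -
  let ?f = "\<lambda>(t, g). join n k t g"
  let ?X = "{p \<in> cube n k \<times> cube n N. ?f p \<in> sols (\<lambda>_. 0) (k * N)}"
  have bij: "bij_betw ?f (cube n k \<times> cube n N) (cube n (k * N))"
    by (rule bij_betw_join[OF assms])
  have "?f ` ?X = sols (\<lambda>_. 0) (k * N) \<inter> ?f ` (cube n k \<times> cube n N)"
    by force
  also have "\<dots> = sols (\<lambda>_. 0) (k * N)"
    using bij_betw_imp_surj_on[OF bij] sols_subset_cube by blast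
  finally have "?f ` ?X = sols (\<lambda>_. 0) (k * N)" .
  moreover have "inj_on ?f ?X"
    using bij_betw_imp_inj_on[OF bij] by (rule inj_on_subset) auto
  ultimately have "card (sols (\<lambda>_. 0) (k * N)) = card ?X"
    using card_image by fastforce
  also have "?X = Sigma (dvd_sols k) (\<lambda>t. sols (carry k t) N)"
    using join_in_sols_0_iff[OF assms] subsetD[OF sols_subset_cube]
    by (auto simp: dvd_sols_def)
  also have "card \<dots> = (\<Sum>t\<in>dvd_sols k. card (sols (carry k t) N))"
    by (rule card_SigmaI) (auto simp: dvd_sols_def)
  finally show ?thesis .
qed

lemma abs_E_blk_le:
  assumes t: "t \<in> cube n k" and b: "b \<in> {1..r}"
  shows "\<bar>E_blk n B t b\<bar> \<le> int n * int k"
proof -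
  have "\<bar>E_blk n B t b\<bar> \<le> (\<Sum>j\<in>B b. \<bar>cyc_diff n (int \<circ> t) j\<bar>)"
    unfolding E_blk_eq_block_diff block_diff_def by (rule sum_abs)
  also have "\<dots> \<le> (\<Sum>j\<in>B b. int k)"
    using abs_cyc_diff_le[OF t] block_subset[OF b] by (intro sum_mono) auto
  also have "\<dots> \<le> int n * int k"
    using card_mono[OF _ block_subset[OF b]] by (simp add: mult_right_mono)
  finally show ?thesis .
qed

lemma carry_mult:
  assumes "t \<in> dvd_sols k" "b \<in> {1..r}"
  shows "int k * carry k t b = - E_blk n B t b"
  using assms by (simp add: dvd_sols_def carry_def)

lemma sum_carry_eq_0:
  assumes "0 < k" "t \<in> dvd_sols k"
  shows "(\<Sum>b=1..r. carry k t b) = 0"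
proof -
  have "int k * (\<Sum>b=1..r. carry k t b) = - (\<Sum>b=1..r. block_diff n B (int \<circ> t) b)"
    using carry_mult[OF assms(2)] by (simp add: sum_distrib_left sum_negf E_blk_eq_block_diff)
  also have "\<dots> = 0"
    unfolding sum_block_diff_eq_0 by simp
  finally show ?thesis
    using assms(1) by simp
qed

lemma abs_carry_le:
  assumes "0 < k" "t \<in> dvd_sols k" "b \<in> {1..r}"
  shows "\<bar>carry k t b\<bar> \<le> int n"
proof -
  have "int k * \<bar>carry k t b\<bar> = \<bar>E_blk n B t b\<bar>"
    using carry_mult[OF assms(2,3)] by (metis abs_minus_cancel abs_mult abs_of_nat)
  also have "\<dots> \<le> int k * int n"
    using abs_E_blk_le[of t k b] assms(2,3) by (simp add: dvd_sols_def mult.commute)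
  finally show ?thesis
    using assms(1) by simp
qed

text \<open>Block 1 is left out: its residue is determined by the others, see \<open>E_blk_1_eq\<close>.\<close>
definition residues :: "nat \<Rightarrow> (nat \<Rightarrow> nat) \<Rightarrow> nat \<Rightarrow> int" where
  "residues k t = (\<lambda>b\<in>{2..r}. E_blk n B t b mod int k)"

lemma residues_eq_iff:
  "u \<in> extensional {2..r} \<Longrightarrow> residues k t = u \<longleftrightarrow> (\<forall>b\<in>{2..r}. E_blk n B t b mod int k = u b)"
  by (auto simp: residues_def extensional_def fun_eq_iff)

lemma E_blk_1_eq: "E_blk n B t 1 = - (\<Sum>b=2..r. E_blk n B t b)"
proof -
  have "{1..r} = insert 1 {2..r}"
    using r_pos by auto
  then have "E_blk n B t 1 + (\<Sum>b=2..r. E_blk n B t b) = (\<Sum>b=1..r. block_diff n B (int \<circ> t) b)"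
    by (simp add: E_blk_eq_block_diff)
  also have "\<dots> = 0"
    by (rule sum_block_diff_eq_0)
  finally show ?thesis
    by simp
qed

text \<open>All residue classes are equally large: translating modulo \<open>k\<close> by a vector \<open>v\<close> whose block
  sums are prescribed moves one class injectively into another.\<close>
lemma card_residues_fiber_le:
  assumes k: "0 < k" and u: "u \<in> {2..r} \<rightarrow>\<^sub>E {0..<int k}" and u': "u' \<in> {2..r} \<rightarrow>\<^sub>E {0..<int k}"
  shows "card {t \<in> cube n k. residues k t = u} \<le> card {t \<in> cube n k. residues k t = u'}"
proof -
  define w where "w b = (if b = 1 then - (\<Sum>c=2..r. u' c - u c) else u' b - u b)" for b
  have "{1..r} = insert 1 {2..r}"
    using r_pos by auto
  then have "(\<Sum>b=1..r. w b) = 0"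
    by (simp add: w_def)
  then obtain v where v: "\<forall>b\<in>{1..r}. block_diff n B v b = w b"
    using exists_block_diff_eq by blast
  have "shift_mod n k v ` {t \<in> cube n k. residues k t = u} \<subseteq> {t \<in> cube n k. residues k t = u'}"
  proof (rule image_subsetI)
    fix t assume "t \<in> {t \<in> cube n k. residues k t = u}"
    then have res: "residues k t = u"
      by simp
    have "E_blk n B (shift_mod n k v t) b mod int k = u' b" if b: "b \<in> {2..r}" for b
    proof -
      have "E_blk n B (shift_mod n k v t) b mod int k = (E_blk n B t b + (u' b - u b)) mod int k"
        using E_blk_shift_mod[OF k block_subset] v b by (simp add: w_def)
      also have "\<dots> = (E_blk n B t b mod int k + (u' b - u b)) mod int k"
        by (simp add: mod_add_left_eq)
      also have "\<dots> = u' b"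
        using res b u' residues_eq_iff[of u] u by (auto simp: PiE_iff)
      finally show ?thesis .
    qed
    then show "shift_mod n k v t \<in> {t \<in> cube n k. residues k t = u'}"
      using u' shift_mod_in_cube[OF k] by (simp add: residues_eq_iff PiE_iff)
  qed
  then show ?thesis
    using inj_on_subset[OF inj_on_shift_mod[OF k]] by (intro card_inj_on_le) auto
qed

lemma residues_fiber_0:
  assumes "0 < k"
  shows "{t \<in> cube n k. residues k t = (\<lambda>b\<in>{2..r}. 0)} = dvd_sols k"
proof -
  have "(\<forall>b\<in>{2..r}. int k dvd E_blk n B t b) \<longleftrightarrow> (\<forall>b\<in>{1..r}. int k dvd E_blk n B t b)" for t
  proof
    assume dvd: "\<forall>b\<in>{2..r}. int k dvd E_blk n B t b"
    then have "int k dvd E_blk n B t 1"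
      unfolding E_blk_1_eq by (intro dvd_minus_iff[THEN iffD2] dvd_sum) auto
    with dvd show "\<forall>b\<in>{1..r}. int k dvd E_blk n B t b"
      by (metis atLeastAtMost_iff le_antisym not_less_eq_eq one_add_one plus_1_eq_Suc)
  qed auto
  then show ?thesis
    by (auto simp: residues_eq_iff dvd_sols_def dvd_eq_mod_eq_0)
qed

lemma card_dvd_sols:
  assumes k: "0 < k"
  shows "card (dvd_sols k) = k ^ (n - r + 1)"
proof -
  let ?U = "{2..r} \<rightarrow>\<^sub>E {0..<int k}"
  have zero: "(\<lambda>b\<in>{2..r}. 0) \<in> ?U"
    using k by auto
  have fiber: "card {t \<in> cube n k. residues k t = u} = card (dvd_sols k)" if "u \<in> ?U" for u
    using card_residues_fiber_le[OF k that zero] card_residues_fiber_le[OF k zero that]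
    by (simp add: residues_fiber_0[OF k])
  have "residues k t \<in> ?U" for t
    using k by (auto simp: residues_def)
  then have "{u \<in> ?U. residues k t = u} = {residues k t}" for t
    by blast
  then have "card {u \<in> ?U. residues k t = u} = 1" for t
    by simp
  then have "(\<Sum>u\<in>?U. card {t \<in> cube n k. residues k t = u}) = 1 * card (cube n k)"
    by (intro sum_multicount) (auto simp: finite_PiE)
  then have "k ^ (r - 1) * card (dvd_sols k) = k ^ ((r - 1) + (n - r + 1))"
    using r_pos r_le_n fiber by (simp add: card_cube card_PiE)
  then show ?thesis
    using k by (simp add: power_add)
qed

lemma card_sols_0_mult_close:
  assumes k: "0 < k" and N: "1 \<le> N"
  shows "\<bar>real (card (sols (\<lambda>_. 0) (k * N))) - real k ^ (n - r + 1) * real (card (sols (\<lambda>_. 0) N))\<bar>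
           \<le> real k ^ (n - r + 1) * (real (2 * n * r * n) * 3 ^ (n - r) * real N ^ (n - r))"
proof -
  let ?C = "real (2 * n * r * n) * 3 ^ (n - r) * real N ^ (n - r)"
  let ?a = "real (card (sols (\<lambda>_. 0) N))"
  have "real (card (sols (\<lambda>_. 0) (k * N))) = (\<Sum>t\<in>dvd_sols k. real (card (sols (carry k t) N)))"
    unfolding card_sols_0_mult[OF k] by (rule of_nat_sum)
  moreover have "real k ^ (n - r + 1) * ?a = (\<Sum>t\<in>dvd_sols k. ?a)"
    by (simp add: card_dvd_sols[OF k])
  ultimately have "\<bar>real (card (sols (\<lambda>_. 0) (k * N))) - real k ^ (n - r + 1) * ?a\<bar>
          = \<bar>\<Sum>t\<in>dvd_sols k. real (card (sols (carry k t) N)) - ?a\<bar>"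
    by (simp only: sum_subtractf)
  also have "\<dots> \<le> (\<Sum>t\<in>dvd_sols k. \<bar>real (card (sols (carry k t) N)) - ?a\<bar>)"
    by (rule sum_abs)
  also have "\<dots> \<le> (\<Sum>t\<in>dvd_sols k. ?C)"
  proof (rule sum_mono)
    fix t assume t: "t \<in> dvd_sols k"
    show "\<bar>real (card (sols (carry k t) N)) - ?a\<bar> \<le> ?C"
      using abs_carry_le[OF k t] by (intro card_sols_close_to_0[OF sum_carry_eq_0[OF k t] _ N]) blast
  qed
  also have "\<dots> = real k ^ (n - r + 1) * ?C"
    by (simp add: card_dvd_sols[OF k])
  finally show ?thesis .
qed

lemma G_fun_0_mult_close:
  assumes k: "0 < k" and N: "1 \<le> N"
  shows "\<bar>G_fun n r B (k * N) (\<lambda>_. 0) - G_fun n r B N (\<lambda>_. 0)\<bar> \<le> real (2 * n * r * n) * 3 ^ (n - r) / real N"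
proof -
  let ?e = "n - r + 1"
  let ?a = "\<lambda>N. real (card (sols (\<lambda>_. 0) N))"
  let ?C = "real (2 * n * r * n) * 3 ^ (n - r)"
  have kN: "1 \<le> k * N"
    using k N by simp
  have pos: "0 < real k ^ ?e" "0 < real N ^ ?e" and nonzero: "real k \<noteq> 0" "real N \<noteq> 0"
    using k N by auto
  have "G_fun n r B (k * N) (\<lambda>_. 0) - G_fun n r B N (\<lambda>_. 0)
          = (?a (k * N) - real k ^ ?e * ?a N) / (real k ^ ?e * real N ^ ?e)"
    unfolding G_fun_eq[OF kN] G_fun_eq[OF N] using nonzero by (simp add: power_mult_distrib field_simps)
  then have "\<bar>G_fun n r B (k * N) (\<lambda>_. 0) - G_fun n r B N (\<lambda>_. 0)\<bar>
               = \<bar>?a (k * N) - real k ^ ?e * ?a N\<bar> / (real k ^ ?e * real N ^ ?e)"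
    using pos by (simp add: abs_divide)
  also have "\<dots> \<le> real k ^ ?e * (?C * real N ^ (n - r)) / (real k ^ ?e * real N ^ ?e)"
    using card_sols_0_mult_close[OF k N] pos by (intro divide_right_mono) auto
  also have "\<dots> = ?C / real N"
    using k N by (simp add: field_simps)
  finally show ?thesis .
qed

lemma convergent_G_fun_0: "convergent (\<lambda>N. G_fun n r B N (\<lambda>_. 0))"
  using G_fun_0_mult_close by (rule convergent_if_mult_close)

end

lemma G_fun_empty_partition:
  assumes "is_partition 0 r B"
  shows "G_fun 0 r B N w = 1 / real N"
proof -
  have "r = 0"
  proof (rule ccontr)
    assume "r \<noteq> 0"
    then have one: "1 \<in> {1..r}"
      by simp
    then have "B 1 \<noteq> {}"
      using assms unfolding is_partition_def by blast
    moreover have "B 1 \<subseteq> (\<Union>b\<in>{1..r}. B b)"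
      using one by blast
    moreover have "(\<Union>b\<in>{1..r}. B b) = {}"
      using assms by (simp add: is_partition_def)
    ultimately show False
      by blast
  qed
  then show ?thesis
    by (simp add: G_fun_def S_count_def)
qed

theorem lemma5:
  fixes n r :: nat and B :: "nat \<Rightarrow> nat set" and m :: "nat \<Rightarrow> int"
  assumes "is_partition n r B"
    and "(\<Sum>b=1..r. m b) = 0"
  shows "(\<lambda>N. G_fun n r B N m) \<longlonglongrightarrow> K_u n r B \<and>
         (\<lambda>N. G_fun n r B N (\<lambda>_. 0)) \<longlonglongrightarrow> K_u n r B"
proof (cases "n = 0")
  case True
  then have G: "G_fun n r B N w = 1 / real N" for N w
    using G_fun_empty_partition assms(1) by simp
  have "(\<lambda>N. 1 / real N) \<longlonglongrightarrow> 0"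
    by (rule lim_const_over_n)
  then have "(\<lambda>N. 1 / real N) \<longlonglongrightarrow> K_u n r B"
    by (simp add: K_u_def G limI)
  then show ?thesis
    by (simp add: G)
next
  case False
  interpret block_partition n r B
    using assms(1) False by unfold_locales auto
  have limit: "(\<lambda>N. G_fun n r B N (\<lambda>_. 0)) \<longlonglongrightarrow> K_u n r B"
    using convergent_G_fun_0 by (simp add: K_u_def convergent_LIMSEQ_iff)
  have "(\<lambda>N. G_fun n r B N (\<lambda>_. 0) + (G_fun n r B N m - G_fun n r B N (\<lambda>_. 0))) \<longlonglongrightarrow> K_u n r B + 0"
    using limit tendsto_G_fun_minus_G_fun_0[OF assms(2)] by (rule tendsto_add)
  with limit show ?thesis
    by simp
qed

end
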